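(* Let $r\ge3$, $n_1,\dots,n_r\ge1$, $p\in \{1,\ldots,\min(n_1,n_2)\}$, $\pi' \in C_2((n_1+n_2-2p)\otimes n_3 \otimes \ldots \otimes n_r)$, $\sigma_1:\{1,\ldots,p\} \to \{1,\ldots,n_1\}$ decreasing and $\sigma_2:\{1,\ldots,p\} \to \{1,\ldots,n_2\}$ injective. Then \[ \mathrm{Cr}(F(\sigma_1,\sigma_2,\pi'))=\alpha_{n_1}(\sigma_1)+\beta(\sigma_2)+\mathrm{Cr}(\pi'). \]
   Context: For a pairing $\pi$ (partition into two-element sets) of a finite set of integers, a crossing is a pair of blocks $\{x_1,y_1\},\{x_2,y_2\}\in\pi$ with $x_1<x_2<y_1<y_2$; $\mathrm{Cr}(\pi)$ is their number. Blocks and respecting pairings: for $n_1,\dots,n_r\ge1$ and $N=n_1+\dots+n_r$, the blocks of $n_1\otimes\cdots\otimes n_r$ are $\{1,\dots,n_1\}$, $\{n_1+1,\dots,n_1+n_2\}$, etc.; $C_2(n_1\otimes\cdots\otimes n_r)$ is the set of pairings of $\{1,\dots,N\}$ each of whose pairs joins two different blocks. For an injective $\sigma:\{1,\dots,p\}\to\{1,\dots,m\}$, $\mathrm{inv}(\sigma)=\mathrm{Card}\{i<j:\sigma(i)>\sigma(j)\}$, $\alpha_n(\sigma):=\sum_{i=1}^p (n+1-\sigma(i))-\frac{p(p+1)}{2}$ and $\beta(\sigma):=\sum_{i=1}^p \sigma(i)-\frac{p(p+1)}{2}+\mathrm{inv}(\sigma)$. Construction $F$: $\pi=F(\sigma_1,\sigma_2,\pi')\in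 C_2(n_1\otimes\cdots\otimes n_r)$ consists of the $p$ pairs $\{\sigma_1(i),n_1+\sigma_2(i)\}$, $1\le i\le p$, together with the pairs obtained from $\pi'$ by identifying the first block $\{1,\dots,n_1+n_2-2p\}$ of $\pi'$ (in increasing order) with the $n_1+n_2-2p$ points of $\{1,\dots,n_1+n_2\}$ not used in those $p$ pairs (in increasing order), and the point $n_1+n_2-2p+j$ of $\pi'$ with $n_1+n_2+j$ for $j\ge1$. *)

theory Defs
  imports Main
begin

definition is_pairing :: "nat set \<Rightarrow> nat set set \<Rightarrow> bool" where
  "is_pairing S \<pi> \<longleftrightarrow> (\<forall>b\<in>\<pi>. card b = 2 \<and> b \<subseteq> S) \<and> (\<forall>x\<in>S. \<exists>!b. b \<in> \<pi> \<and> x \<in> b)"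

definition Cr :: "nat set set \<Rightarrow> nat" where
  "Cr \<pi> = card {(b1, b2). b1 \<in> \<pi> \<and> b2 \<in> \<pi> \<and>
     (\<exists>x1 y1 x2 y2. b1 = {x1, y1} \<and> b2 = {x2, y2} \<and> x1 < x2 \<and> x2 < y1 \<and> y1 < y2)}"

text \<open>Index (0-based) of the block of n_1 (x) ... (x) n_r containing the point k,
  where the block sizes are given by the list ns.\<close>
definition blk :: "nat list \<Rightarrow> nat \<Rightarrow> nat" where
  "blk ns k = card {i. i < length ns \<and> sum_list (take (Suc i) ns) < k}"

definition C2 :: "nat list \<Rightarrow> nat set set set" where
  "C2 ns = {\<pi>. is_pairing {1..sum_list ns} \<pi> \<and>
     (\<forall>b\<in>\<pi>. \<forall>x\<in>b. \<forall>y\<in>b. x \<noteq> y \<longrightarrow> blk ns x \<noteq> blk ns y)}"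

definition inj_map :: "nat \<Rightarrow> nat \<Rightarrow> (nat \<Rightarrow> nat) \<Rightarrow> bool" where
  "inj_map p m \<sigma> \<longleftrightarrow> inj_on \<sigma> {1..p} \<and> \<sigma> ` {1..p} \<subseteq> {1..m}"

definition inv_num :: "nat \<Rightarrow> (nat \<Rightarrow> nat) \<Rightarrow> nat" where
  "inv_num p \<sigma> = card {(i, j). 1 \<le> i \<and> i < j \<and> j \<le> p \<and> \<sigma> i > \<sigma> j}"

definition alpha :: "nat \<Rightarrow> nat \<Rightarrow> (nat \<Rightarrow> nat) \<Rightarrow> int" where
  "alpha n p \<sigma> = (\<Sum>i=1..p. int n + 1 - int (\<sigma> i)) - int (p * (p + 1) div 2)"

definition beta :: "nat \<Rightarrow> (nat \<Rightarrow> nat) \<Rightarrow> int" where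
  "beta p \<sigma> = (\<Sum>i=1..p. int (\<sigma> i)) - int (p * (p + 1) div 2) + int (inv_num p \<sigma>)"

definition unused :: "nat \<Rightarrow> nat \<Rightarrow> nat \<Rightarrow> (nat \<Rightarrow> nat) \<Rightarrow> (nat \<Rightarrow> nat) \<Rightarrow> nat set" where
  "unused n1 n2 p \<sigma>1 \<sigma>2 = {1..n1+n2} - (\<sigma>1 ` {1..p} \<union> (\<lambda>i. n1 + \<sigma>2 i) ` {1..p})"

definition relabel :: "nat \<Rightarrow> nat \<Rightarrow> nat \<Rightarrow> (nat \<Rightarrow> nat) \<Rightarrow> (nat \<Rightarrow> nat) \<Rightarrow> nat \<Rightarrow> nat" where
  "relabel n1 n2 p \<sigma>1 \<sigma>2 k =
     (if k \<le> n1 + n2 - 2 * p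
      then sorted_list_of_set (unused n1 n2 p \<sigma>1 \<sigma>2) ! (k - 1)
      else k + 2 * p)"

definition F :: "nat \<Rightarrow> nat \<Rightarrow> nat \<Rightarrow> (nat \<Rightarrow> nat) \<Rightarrow> (nat \<Rightarrow> nat) \<Rightarrow> nat set set \<Rightarrow> nat set set" where
  "F n1 n2 p \<sigma>1 \<sigma>2 \<pi>' =
     {{\<sigma>1 i, n1 + \<sigma>2 i} | i. i \<in> {1..p}} \<union> (\<lambda>b. relabel n1 n2 p \<sigma>1 \<sigma>2 ` b) ` \<pi>'"

end

theory Submission
  imports Defs
begin

text \<open>
  F consists of the p new pairs \<open>{\<sigma>1 i, n1 + \<sigma>2 i}\<close> and of a copy of \<pi>' relabelled by an
  increasing map, so the crossings inside the copy are exactly those of \<pi>'. Because \<sigma>1 is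
  decreasing, two new pairs cross exactly at an inversion of \<sigma>2. Every pair of \<pi>' leaves the
  first block, so every relabelled pair ends beyond n1 + n2: it never crosses a new pair from
  the left, and it crosses the new pair i from the right exactly when its left end is a free
  point (one not used by the new pairs) strictly between \<sigma>1 i and n1 + \<sigma>2 i. Each free point
  is the left end of exactly one relabelled pair. Counting free points in these intervals,
  and using that an injection on p points has p(p-1)/2 ordered comparisons of each sign,
  produces the remaining terms of \<alpha>(\<sigma>1) + \<beta>(\<sigma>2).
\<close>

section \<open>Crossings\<close>

definition crosses :: "nat set \<Rightarrow> nat set \<Rightarrow> bool" where
  "crosses b1 b2 \<longleftrightarrow> (\<exists>x1 y1 x2 y2. b1 = {x1, y1} \<and> b2 = {x2, y2} \<and> x1 < x2 \<and> x2 < y1 \<and> y1 < y2)"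

definition crossings :: "nat set set \<Rightarrow> nat set set \<Rightarrow> (nat set \<times> nat set) set" where
  "crossings \<pi> \<rho> = {(b1, b2). b1 \<in> \<pi> \<and> b2 \<in> \<rho> \<and> crosses b1 b2}"

lemma Cr_eq_card_crossings: "Cr \<pi> = card (crossings \<pi> \<pi>)"
  unfolding Cr_def crossings_def crosses_def by simp

lemma crossings_subset: "crossings \<pi> \<rho> \<subseteq> \<pi> \<times> \<rho>"
  unfolding crossings_def by auto

lemma finite_crossings: "finite \<pi> \<Longrightarrow> finite \<rho> \<Longrightarrow> finite (crossings \<pi> \<rho>)"
  unfolding crossings_def by (rule finite_subset[of _ "\<pi> \<times> \<rho>"]) auto

lemma card_eq_2_obtain_less:
  fixes b :: "'a::linorder set"
  assumes "card b = 2"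
  obtains x y where "b = {x, y}" "x < y"
proof -
  from assms obtain x y where "b = {x, y}" "x \<noteq> y"
    unfolding card_2_iff by blast
  then show ?thesis
    using that by (cases x y rule: linorder_cases) (auto simp: insert_commute)
qed

lemma crosses_doubleton_iff:
  assumes "a < b" "c < d"
  shows "crosses {a, b} {c, d} \<longleftrightarrow> a < c \<and> c < b \<and> b < d"
  using assms unfolding crosses_def by (auto simp: doubleton_eq_iff)

lemma Cr_Un_disjoint:
  assumes "finite \<pi>" "finite \<rho>" "\<pi> \<inter> \<rho> = {}"
  shows "Cr (\<pi> \<union> \<rho>) = Cr \<pi> + Cr \<rho> + card (crossings \<pi> \<rho>) + card (crossings \<rho> \<pi>)"
proof -
  have split: "crossings (\<pi> \<union> \<rho>) (\<pi> \<union> \<rho>)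
      = (crossings \<pi> \<pi> \<union> crossings \<rho> \<rho>) \<union> (crossings \<pi> \<rho> \<union> crossings \<rho> \<pi>)"
    unfolding crossings_def by auto
  have disjoint: "(crossings \<pi> \<pi> \<union> crossings \<rho> \<rho>) \<inter> (crossings \<pi> \<rho> \<union> crossings \<rho> \<pi>) = {}"
    "crossings \<pi> \<pi> \<inter> crossings \<rho> \<rho> = {}" "crossings \<pi> \<rho> \<inter> crossings \<rho> \<pi> = {}"
    using crossings_subset[of \<pi> \<pi>] crossings_subset[of \<rho> \<rho>] crossings_subset[of \<pi> \<rho>]
      crossings_subset[of \<rho> \<pi>] assms(3) by blast+
  show ?thesis
    unfolding Cr_eq_card_crossings split
    using assms(1,2) disjoint by (simp add: card_Un_disjoint finite_crossings)
qed

lemma Cr_image_strict_mono_on: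
  assumes g: "strict_mono_on S g"
    and blocks: "\<And>b. b \<in> \<pi> \<Longrightarrow> card b = 2 \<and> b \<subseteq> S"
  shows "Cr ((`) g ` \<pi>) = Cr \<pi>"
proof -
  have inj_image: "inj_on ((`) g) \<pi>"
    using strict_mono_on_imp_inj_on[OF g] blocks
    by (intro inj_onI) (metis inj_on_image_eq_iff)
  have crosses_image: "crosses (g ` b1) (g ` b2) \<longleftrightarrow> crosses b1 b2"
    if "b1 \<in> \<pi>" "b2 \<in> \<pi>" for b1 b2
  proof -
    obtain a b where ab: "b1 = {a, b}" "a < b"
      using blocks[OF \<open>b1 \<in> \<pi>\<close>] card_eq_2_obtain_less by metis
    obtain c d where cd: "b2 = {c, d}" "c < d"
      using blocks[OF \<open>b2 \<in> \<pi>\<close>] card_eq_2_obtain_less by metis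
    have "a \<in> S" "b \<in> S" "c \<in> S" "d \<in> S"
      using blocks that ab cd by auto
    then show ?thesis
      using ab cd by (simp add: crosses_doubleton_iff strict_mono_on_less[OF g])
  qed
  have "crossings ((`) g ` \<pi>) ((`) g ` \<pi>) = map_prod ((`) g) ((`) g) ` crossings \<pi> \<pi>"
    unfolding crossings_def using crosses_image by fastforce
  moreover have "inj_on (map_prod ((`) g) ((`) g)) (crossings \<pi> \<pi>)"
    using inj_image unfolding crossings_def inj_on_def by auto
  ultimately show ?thesis
    unfolding Cr_eq_card_crossings by (simp add: card_image)
qed

section \<open>Pairings and the block structure\<close>

lemma is_pairing_finite: "finite S \<Longrightarrow> is_pairing S \<pi> \<Longrightarrow> finite \<pi>"
  unfolding is_pairing_def by (rule finite_subset[of _ "Pow S"]) auto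

lemma is_pairing_unique: "is_pairing S \<pi> \<Longrightarrow> b \<in> \<pi> \<Longrightarrow> b' \<in> \<pi> \<Longrightarrow> x \<in> b \<Longrightarrow> x \<in> b' \<Longrightarrow> b = b'"
  unfolding is_pairing_def by blast

lemma is_pairing_cover: "is_pairing S \<pi> \<Longrightarrow> x \<in> S \<Longrightarrow> \<exists>b\<in>\<pi>. x \<in> b"
  unfolding is_pairing_def by blast

lemma blk_first_block:
  assumes "k \<le> m"
  shows "blk (m # ns) k = 0"
proof -
  have "\<not> sum_list (take (Suc i) (m # ns)) < k" for i
    using assms by simp
  then show ?thesis
    unfolding blk_def by simp
qed

lemma C2_block_above_first:
  assumes "\<pi> \<in> C2 (m # ns)" "b \<in> \<pi>"
  obtains x y where "b = {x, y}" "1 \<le> x" "x < y" "m < y"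
proof -
  have "is_pairing {1..sum_list (m # ns)} \<pi>"
    and separated: "\<forall>x\<in>b. \<forall>y\<in>b. x \<noteq> y \<longrightarrow> blk (m # ns) x \<noteq> blk (m # ns) y"
    using assms unfolding C2_def by blast+
  then have "card b = 2" "b \<subseteq> {1..sum_list (m # ns)}"
    using assms(2) unfolding is_pairing_def by blast+
  then obtain x y where xy: "b = {x, y}" "x < y" "1 \<le> x"
    using card_eq_2_obtain_less by (metis atLeastAtMost_iff insert_subset)
  have "m < y"
  proof (rule ccontr)
    assume "\<not> m < y"
    then have "blk (m # ns) x = blk (m # ns) y"
      using blk_first_block xy(2) by simp
    then show False
      using separated xy by simp
  qed
  then show ?thesis
    using that xy by blast
qed

section \<open>Counting comparisons of an injection\<close>

lemma card_pairs_less_inj_on: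
  fixes f :: "'a \<Rightarrow> 'b::linorder"
  assumes "finite S" "inj_on f S"
  shows "2 * card {(i, j). i \<in> S \<and> j \<in> S \<and> f i < f j} = card S * (card S - 1)"
proof -
  let ?less = "{(i, j). i \<in> S \<and> j \<in> S \<and> f i < f j}"
  have swap: "prod.swap ` ?less = {(i, j). i \<in> S \<and> j \<in> S \<and> f j < f i}" by auto
  have "?less \<union> prod.swap ` ?less = S \<times> S - Id_on S"
    using assms(2) unfolding swap inj_on_def by (auto dest: linorder_neqE)
  moreover have "card (S \<times> S - Id_on S) = card S * card S - card S"
  proof -
    have diagonal: "Id_on S = (\<lambda>x. (x, x)) ` S" by auto
    have "card (S \<times> S - Id_on S) = card (S \<times> S) - card (Id_on S)"
      using assms(1) by (intro card_Diff_subset) (auto simp: diagonal)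
    then show ?thesis
      by (simp add: diagonal card_image inj_on_def card_cartesian_product)
  qed
  moreover have "card (?less \<union> prod.swap ` ?less) = card ?less + card (prod.swap ` ?less)"
    by (rule card_Un_disjoint) (use assms(1) in \<open>auto intro: finite_subset[of _ "S \<times> S"]\<close>)
  ultimately show ?thesis
    by (simp add: card_image diff_mult_distrib2)
qed

lemma sum_card_eq_card_pairs:
  assumes "finite S"
  shows "(\<Sum>i\<in>S. card {j\<in>S. R i j}) = card {(i, j). i \<in> S \<and> j \<in> S \<and> R i j}"
proof -
  have "{(i, j). i \<in> S \<and> j \<in> S \<and> R i j} = Sigma S (\<lambda>i. {j\<in>S. R i j})"
    by auto
  then show ?thesis
    using assms by simp
qed

lemma sum_card_greater_inj_on:
  fixes f :: "'a \<Rightarrow> 'b::linorder"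
  assumes "finite S" "inj_on f S"
  shows "2 * (\<Sum>i\<in>S. card {j\<in>S. f i < f j}) = card S * (card S - 1)"
  using card_pairs_less_inj_on[OF assms] sum_card_eq_card_pairs[OF assms(1)] by simp

lemma sum_card_less_inj_on:
  fixes f :: "'a \<Rightarrow> 'b::linorder"
  assumes "finite S" "inj_on f S"
  shows "2 * (\<Sum>i\<in>S. card {j\<in>S. f j < f i}) = card S * (card S - 1)"
proof -
  have "{(i, j). i \<in> S \<and> j \<in> S \<and> f j < f i} = prod.swap ` {(i, j). i \<in> S \<and> j \<in> S \<and> f i < f j}"
    by auto
  then show ?thesis
    using card_pairs_less_inj_on[OF assms] sum_card_eq_card_pairs[OF assms(1)]
    by (simp add: card_image)
qed

section \<open>The construction F\<close>

locale F_construction =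
  fixes n1 n2 p :: nat and \<sigma>1 \<sigma>2 :: "nat \<Rightarrow> nat" and \<pi>' :: "nat set set" and ns :: "nat list"
  assumes p_le: "p \<le> n1" "p \<le> n2"
    and \<sigma>1_inj_map: "inj_map p n1 \<sigma>1"
    and \<sigma>1_decreasing: "\<And>i j. 1 \<le> i \<Longrightarrow> i < j \<Longrightarrow> j \<le> p \<Longrightarrow> \<sigma>1 j < \<sigma>1 i"
    and \<sigma>2_inj_map: "inj_map p n2 \<sigma>2"
    and \<pi>'_C2: "\<pi>' \<in> C2 ((n1 + n2 - 2 * p) # ns)"
begin

abbreviation m :: nat where "m \<equiv> n1 + n2 - 2 * p"
abbreviation U :: "nat set" where "U \<equiv> unused n1 n2 p \<sigma>1 \<sigma>2"
abbreviation g :: "nat \<Rightarrow> nat" where "g \<equiv> relabel n1 n2 p \<sigma>1 \<sigma>2"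

lemma m_plus_2p: "m + 2 * p = n1 + n2"
  using p_le by simp

lemma \<sigma>1_range: "i \<in> {1..p} \<Longrightarrow> 1 \<le> \<sigma>1 i \<and> \<sigma>1 i \<le> n1"
  using \<sigma>1_inj_map unfolding inj_map_def by (auto simp: image_subset_iff)

lemma \<sigma>2_range: "i \<in> {1..p} \<Longrightarrow> 1 \<le> \<sigma>2 i \<and> \<sigma>2 i \<le> n2"
  using \<sigma>2_inj_map unfolding inj_map_def by (auto simp: image_subset_iff)

lemma inj_on_\<sigma>1: "inj_on \<sigma>1 {1..p}"
  using \<sigma>1_inj_map unfolding inj_map_def by blast

lemma inj_on_\<sigma>2: "inj_on \<sigma>2 {1..p}"
  using \<sigma>2_inj_map unfolding inj_map_def by blast

lemma inj_on_shifted_\<sigma>2: "inj_on (\<lambda>i. n1 + \<sigma>2 i) {1..p}"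
  using comp_inj_on[OF inj_on_\<sigma>2 inj_on_add[of n1]] by (simp add: comp_def)

lemma \<sigma>1_less_iff:
  assumes "u \<in> {1..p}" "v \<in> {1..p}"
  shows "\<sigma>1 u < \<sigma>1 v \<longleftrightarrow> v < u"
proof (cases u v rule: linorder_cases)
  case less
  then show ?thesis using \<sigma>1_decreasing[of u v] assms by simp
next
  case greater
  then show ?thesis using \<sigma>1_decreasing[of v u] assms by simp
qed simp

lemma finite_unused: "finite U"
  unfolding unused_def by simp

lemma unused_subset: "U \<subseteq> {1..n1 + n2}"
  unfolding unused_def by blast

lemma card_unused: "card U = m"
proof -
  let ?X1 = "\<sigma>1 ` {1..p}" and ?X2 = "(\<lambda>i. n1 + \<sigma>2 i) ` {1..p}"
  have "card ?X1 = p" "card ?X2 = p"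
    using inj_on_\<sigma>1 inj_on_shifted_\<sigma>2 by (simp_all add: card_image)
  moreover have "?X1 \<inter> ?X2 = {}"
    using \<sigma>1_range \<sigma>2_range by fastforce
  ultimately have "card (?X1 \<union> ?X2) = 2 * p"
    by (simp add: card_Un_disjoint)
  moreover have "?X1 \<union> ?X2 \<subseteq> {1..n1 + n2}"
    using \<sigma>1_range \<sigma>2_range by fastforce
  ultimately show ?thesis
    unfolding unused_def by (simp add: card_Diff_subset finite_subset)
qed

lemma sorted_list_of_unused:
  "length (sorted_list_of_set U) = m" "set (sorted_list_of_set U) = U"
  "sorted_wrt (<) (sorted_list_of_set U)"
  using finite_unused card_unused by simp_all

lemma relabel_first_block: "k \<le> m \<Longrightarrow> g k = sorted_list_of_set U ! (k - 1)"
  unfolding relabel_def by simp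

lemma relabel_above: "m < k \<Longrightarrow> g k = k + 2 * p"
  unfolding relabel_def by simp

lemma relabel_mem_unused:
  assumes "k \<in> {1..m}"
  shows "g k \<in> U"
proof -
  have "k - 1 < length (sorted_list_of_set U)"
    using assms unfolding sorted_list_of_unused(1) by auto
  then show ?thesis
    using assms nth_mem sorted_list_of_unused(2) by (fastforce simp: relabel_first_block)
qed

lemma relabel_strict_mono: "strict_mono_on {1..} g"
proof (rule strict_mono_onI)
  fix x y :: nat
  assume "x \<in> {1..}" "y \<in> {1..}" "x < y"
  then have "1 \<le> x" "x < y" by simp_all
  consider "y \<le> m" | "x \<le> m" "m < y" | "m < x"
    using \<open>x < y\<close> by linarith
  then show "g x < g y"
  proof cases
    case 1
    then show ?thesis
      using \<open>1 \<le> x\<close> \<open>x < y\<close> sorted_list_of_unused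
      by (simp add: relabel_first_block sorted_wrt_nth_less)
  next
    case 2
    then have "g x \<le> n1 + n2"
      using relabel_mem_unused unused_subset \<open>1 \<le> x\<close> by fastforce
    then show ?thesis
      using 2 m_plus_2p by (simp add: relabel_above)
  next
    case 3
    then show ?thesis
      using \<open>x < y\<close> by (simp add: relabel_above)
  qed
qed

lemma relabel_image_first_block: "g ` {1..m} = U"
proof
  show "g ` {1..m} \<subseteq> U"
    using relabel_mem_unused by blast
next
  show "U \<subseteq> g ` {1..m}"
  proof
    fix u assume "u \<in> U"
    then obtain t where "t < m" "sorted_list_of_set U ! t = u"
      using sorted_list_of_unused by (metis in_set_conv_nth)
    then show "u \<in> g ` {1..m}"
      by (intro image_eqI[of _ _ "Suc t"]) (simp_all add: relabel_first_block)
  qed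
qed

lemma pairing_\<pi>': "is_pairing {1..sum_list (m # ns)} \<pi>'"
  using \<pi>'_C2 unfolding C2_def by blast

lemma finite_\<pi>': "finite \<pi>'"
  using is_pairing_finite[OF _ pairing_\<pi>'] by simp

lemma \<pi>'_block_shape:
  assumes "b \<in> \<pi>'"
  obtains x y where "b = {x, y}" "1 \<le> x" "x < y" "m < y"
  by (rule C2_block_above_first[OF \<pi>'_C2 assms])

definition new_block :: "nat \<Rightarrow> nat set" where
  "new_block i = {\<sigma>1 i, n1 + \<sigma>2 i}"

definition new_blocks :: "nat set set" where
  "new_blocks = new_block ` {1..p}"

definition old_blocks :: "nat set set" where
  "old_blocks = (`) g ` \<pi>'"

lemma F_eq_new_blocks_Un_old_blocks: "F n1 n2 p \<sigma>1 \<sigma>2 \<pi>' = new_blocks \<union> old_blocks"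
  unfolding F_def new_blocks_def old_blocks_def new_block_def by auto

lemma new_block_less: "i \<in> {1..p} \<Longrightarrow> \<sigma>1 i < n1 + \<sigma>2 i"
  using \<sigma>1_range \<sigma>2_range by fastforce

lemma crosses_new_block_iff:
  assumes "i \<in> {1..p}" "c < d"
  shows "crosses (new_block i) {c, d} \<longleftrightarrow> \<sigma>1 i < c \<and> c < n1 + \<sigma>2 i \<and> n1 + \<sigma>2 i < d"
  unfolding new_block_def using crosses_doubleton_iff[OF new_block_less[OF assms(1)] assms(2)] .

lemma inj_on_new_block: "inj_on new_block {1..p}"
proof (rule inj_onI)
  fix i j assume ij: "i \<in> {1..p}" "j \<in> {1..p}" "new_block i = new_block j"
  then have "\<sigma>1 i = \<sigma>1 j"
    using new_block_less[OF ij(1)] new_block_less[OF ij(2)]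
    unfolding new_block_def by (auto simp: doubleton_eq_iff)
  then show "i = j"
    using inj_on_\<sigma>1 ij(1,2) by (simp add: inj_on_eq_iff)
qed

lemma crosses_new_block_new_block_iff:
  assumes "u \<in> {1..p}" "v \<in> {1..p}"
  shows "crosses (new_block u) (new_block v) \<longleftrightarrow> v < u \<and> \<sigma>2 u < \<sigma>2 v"
proof -
  have "\<sigma>1 v < n1 + \<sigma>2 u"
    using \<sigma>1_range[OF assms(2)] \<sigma>2_range[OF assms(1)] by simp
  then show ?thesis
    using crosses_new_block_iff[OF assms(1) new_block_less[OF assms(2)]] \<sigma>1_less_iff[OF assms]
    unfolding new_block_def[of v] by auto
qed

lemma Cr_new_blocks: "Cr new_blocks = inv_num p \<sigma>2"
proof -
  let ?inversions = "{(i, j). 1 \<le> i \<and> i < j \<and> j \<le> p \<and> \<sigma>2 i > \<sigma>2 j}"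
  let ?h = "\<lambda>(i, j). (new_block j, new_block i)"
  have "crossings new_blocks new_blocks = ?h ` ?inversions"
  proof (rule set_eqI)
    fix z
    show "z \<in> crossings new_blocks new_blocks \<longleftrightarrow> z \<in> ?h ` ?inversions"
      unfolding crossings_def new_blocks_def using crosses_new_block_new_block_iff by fastforce
  qed
  moreover have "inj_on ?h ?inversions"
    by (rule inj_onI) (auto dest: inj_onD[OF inj_on_new_block])
  ultimately show ?thesis
    unfolding Cr_eq_card_crossings inv_num_def by (simp add: card_image)
qed

lemma old_blocks_shape:
  assumes "b \<in> old_blocks"
  obtains x y where "{x, y} \<in> \<pi>'" "b = {g x, g y}" "1 \<le> x" "g x < g y" "n1 + n2 < g y"
proof -
  obtain b' where "b' \<in> \<pi>'" "b = g ` b'"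
    using assms unfolding old_blocks_def by blast
  moreover obtain x y where "b' = {x, y}" "1 \<le> x" "x < y" "m < y"
    using \<pi>'_block_shape[OF \<open>b' \<in> \<pi>'\<close>] by blast
  moreover have "g x < g y"
    using relabel_strict_mono \<open>1 \<le> x\<close> \<open>x < y\<close> by (simp add: strict_mono_onD)
  moreover have "n1 + n2 < g y"
    using \<open>m < y\<close> m_plus_2p by (simp add: relabel_above)
  ultimately show ?thesis
    using that by simp
qed

lemma new_blocks_disjoint_old_blocks: "new_blocks \<inter> old_blocks = {}"
proof -
  have "b \<notin> old_blocks" if "b \<in> new_blocks" for b
  proof
    assume "b \<in> old_blocks"
    then obtain x y where "b = {g x, g y}" "n1 + n2 < g y"
      using old_blocks_shape by metis
    moreover have "b \<subseteq> {1..n1 + n2}"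
      using that \<sigma>1_range \<sigma>2_range unfolding new_blocks_def new_block_def by fastforce
    ultimately show False
      by auto
  qed
  then show ?thesis
    by blast
qed

lemma Cr_old_blocks: "Cr old_blocks = Cr \<pi>'"
  unfolding old_blocks_def
proof (rule Cr_image_strict_mono_on[OF relabel_strict_mono])
  fix b assume "b \<in> \<pi>'"
  then show "card b = 2 \<and> b \<subseteq> {1..}"
    using pairing_\<pi>' unfolding is_pairing_def by fastforce
qed

lemma no_crossings_old_new: "crossings old_blocks new_blocks = {}"
proof -
  have "\<not> crosses b (new_block i)" if "b \<in> old_blocks" "i \<in> {1..p}" for b i
  proof
    assume "crosses b (new_block i)"
    moreover obtain x y where "b = {g x, g y}" "g x < g y" "n1 + n2 < g y"
      using old_blocks_shape[OF \<open>b \<in> old_blocks\<close>] by metis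
    ultimately have "g y < n1 + \<sigma>2 i"
      using crosses_doubleton_iff[OF _ new_block_less[OF that(2)]] unfolding new_block_def by auto
    then show False
      using \<open>n1 + n2 < g y\<close> \<sigma>2_range[OF that(2)] by simp
  qed
  then show ?thesis
    unfolding crossings_def new_blocks_def by blast
qed

lemma crosses_old_block_iff:
  assumes "b \<in> old_blocks" "a < c" "c \<le> n1 + n2"
  shows "crosses {a, c} b \<longleftrightarrow> Min b \<in> U \<inter> {a<..<c}"
proof -
  obtain x y where xy: "b = {g x, g y}" "1 \<le> x" "g x < g y" "n1 + n2 < g y"
    using old_blocks_shape[OF assms(1)] by metis
  have "g x \<in> U" if "g x < c"
  proof (rule relabel_mem_unused)
    have "\<not> m < x"
      using that assms(3) m_plus_2p by (auto simp: relabel_above)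
    then show "x \<in> {1..m}"
      using xy(2) by simp
  qed
  moreover have "Min b = g x"
    using xy by simp
  ultimately show ?thesis
    using crosses_doubleton_iff[OF assms(2) xy(3)] xy assms(3) by auto
qed

lemma inj_on_Min_old_blocks: "inj_on Min old_blocks"
proof (rule inj_onI)
  fix b1 b2 assume "b1 \<in> old_blocks" "b2 \<in> old_blocks" "Min b1 = Min b2"
  obtain x1 y1 where 1: "{x1, y1} \<in> \<pi>'" "b1 = {g x1, g y1}" "1 \<le> x1" "g x1 < g y1"
    using old_blocks_shape[OF \<open>b1 \<in> old_blocks\<close>] by metis
  obtain x2 y2 where 2: "{x2, y2} \<in> \<pi>'" "b2 = {g x2, g y2}" "1 \<le> x2" "g x2 < g y2"
    using old_blocks_shape[OF \<open>b2 \<in> old_blocks\<close>] by metis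
  have "g x1 = g x2"
    using \<open>Min b1 = Min b2\<close> 1 2 by simp
  then have "x1 = x2"
    using strict_mono_on_eqD[OF relabel_strict_mono] 1(3) 2(3) by simp
  then have "{x1, y1} = {x2, y2}"
    using is_pairing_unique[OF pairing_\<pi>' 1(1) 2(1), of x1] by simp
  then show "b1 = b2"
    using 1(2) 2(2) by (metis image_empty image_insert)
qed

lemma unused_subset_Min_old_blocks: "U \<subseteq> Min ` old_blocks"
proof
  fix u assume "u \<in> U"
  then obtain k where k: "k \<in> {1..m}" "g k = u"
    unfolding relabel_image_first_block[symmetric] by blast
  then have "k \<in> {1..sum_list (m # ns)}"
    by simp
  then obtain b where "b \<in> \<pi>'" "k \<in> b"
    using is_pairing_cover[OF pairing_\<pi>'] by blast
  moreover obtain x y where xy: "b = {x, y}" "1 \<le> x" "x < y" "m < y"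
    using \<pi>'_block_shape[OF \<open>b \<in> \<pi>'\<close>] by blast
  ultimately have "k = x"
    using k(1) by fastforce
  have "g x < g y"
    using relabel_strict_mono xy(2,3) by (simp add: strict_mono_onD)
  then have "Min (g ` b) = g x"
    using xy(1) by simp
  moreover have "g ` b \<in> old_blocks"
    unfolding old_blocks_def using \<open>b \<in> \<pi>'\<close> by (rule imageI)
  ultimately show "u \<in> Min ` old_blocks"
    using k(2) \<open>k = x\<close> by (metis image_eqI)
qed

lemma card_old_blocks_crossing:
  assumes "a < c" "c \<le> n1 + n2"
  shows "card {b \<in> old_blocks. crosses {a, c} b} = card (U \<inter> {a<..<c})"
proof -
  let ?C = "{b \<in> old_blocks. crosses {a, c} b}"
  have "Min ` ?C = U \<inter> {a<..<c}"
  proof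
    show "Min ` ?C \<subseteq> U \<inter> {a<..<c}"
      using crosses_old_block_iff[OF _ assms] by blast
  next
    show "U \<inter> {a<..<c} \<subseteq> Min ` ?C"
    proof
      fix u assume u: "u \<in> U \<inter> {a<..<c}"
      then obtain b where b: "b \<in> old_blocks" "u = Min b"
        using unused_subset_Min_old_blocks by blast
      then have "crosses {a, c} b"
        using crosses_old_block_iff[OF b(1) assms] u by simp
      then show "u \<in> Min ` ?C"
        using b by blast
    qed
  qed
  moreover have "inj_on Min ?C"
    using inj_on_Min_old_blocks by (rule inj_on_subset) blast
  ultimately show ?thesis
    using card_image[of Min ?C] by simp
qed

lemma card_crossings_new_old:
  "card (crossings new_blocks old_blocks) = (\<Sum>i=1..p. card (U \<inter> {\<sigma>1 i<..<n1 + \<sigma>2 i}))"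
proof -
  let ?C = "\<lambda>i. {b \<in> old_blocks. crosses (new_block i) b}"
  let ?h = "\<lambda>(i, b). (new_block i, b)"
  have "crossings new_blocks old_blocks = ?h ` Sigma {1..p} ?C"
    unfolding crossings_def new_blocks_def by auto
  moreover have "inj_on ?h (Sigma {1..p} ?C)"
    by (rule inj_onI) (auto dest: inj_onD[OF inj_on_new_block])
  moreover have "finite old_blocks"
    unfolding old_blocks_def using finite_\<pi>' by simp
  ultimately have "card (crossings new_blocks old_blocks) = (\<Sum>i=1..p. card (?C i))"
    by (simp add: card_image)
  also have "\<dots> = (\<Sum>i=1..p. card (U \<inter> {\<sigma>1 i<..<n1 + \<sigma>2 i}))"
  proof (rule sum.cong)
    fix i assume "i \<in> {1..p}"
    then show "card (?C i) = card (U \<inter> {\<sigma>1 i<..<n1 + \<sigma>2 i})"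
      using card_old_blocks_crossing[OF new_block_less] \<sigma>2_range unfolding new_block_def by simp
  qed simp
  finally show ?thesis .
qed

lemma card_unused_between:
  assumes "i \<in> {1..p}"
  shows "card (U \<inter> {\<sigma>1 i<..<n1 + \<sigma>2 i}) + card {j \<in> {1..p}. \<sigma>1 i < \<sigma>1 j}
           + card {j \<in> {1..p}. \<sigma>2 j < \<sigma>2 i} + \<sigma>1 i + 1 = n1 + \<sigma>2 i"
proof -
  define I where "I = {\<sigma>1 i<..<n1 + \<sigma>2 i}"
  define G where "G = {j \<in> {1..p}. \<sigma>1 i < \<sigma>1 j}"
  define L where "L = {j \<in> {1..p}. \<sigma>2 j < \<sigma>2 i}"
  have used: "I - U = \<sigma>1 ` G \<union> (\<lambda>j. n1 + \<sigma>2 j) ` L"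
  proof -
    have "I \<subseteq> {1..n1 + n2}"
      unfolding I_def using \<sigma>2_range[OF assms] by auto
    moreover have "\<sigma>1 ` {1..p} \<inter> I = \<sigma>1 ` G"
      unfolding I_def G_def using \<sigma>1_range \<sigma>2_range[OF assms] by fastforce
    moreover have "(\<lambda>j. n1 + \<sigma>2 j) ` {1..p} \<inter> I = (\<lambda>j. n1 + \<sigma>2 j) ` L"
      unfolding I_def L_def using \<sigma>1_range[OF assms] \<sigma>2_range by fastforce
    ultimately show ?thesis
      unfolding unused_def by blast
  qed
  have "card (\<sigma>1 ` G \<union> (\<lambda>j. n1 + \<sigma>2 j) ` L) = card G + card L"
  proof -
    have "\<sigma>1 ` G \<inter> (\<lambda>j. n1 + \<sigma>2 j) ` L = {}"
      unfolding G_def L_def using \<sigma>1_range \<sigma>2_range by fastforce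
    moreover have "card (\<sigma>1 ` G) = card G" "card ((\<lambda>j. n1 + \<sigma>2 j) ` L) = card L"
      unfolding G_def L_def
      by (auto intro!: card_image inj_on_subset[OF inj_on_\<sigma>1] inj_on_subset[OF inj_on_shifted_\<sigma>2])
    ultimately show ?thesis
      unfolding G_def L_def by (simp add: card_Un_disjoint)
  qed
  moreover have "card I = card (I \<inter> U) + card (I - U)"
    unfolding I_def by (rule card_Int_Diff) simp
  ultimately have "card I = card (U \<inter> I) + card G + card L"
    by (simp add: used Int_commute)
  then show ?thesis
    using new_block_less[OF assms] unfolding I_def G_def L_def by simp
qed

lemma sum_card_unused_between:
  "int (\<Sum>i=1..p. card (U \<inter> {\<sigma>1 i<..<n1 + \<sigma>2 i}))
     = (\<Sum>i=1..p. int n1 + 1 - int (\<sigma>1 i)) + (\<Sum>i=1..p. int (\<sigma>2 i)) - int p * (int p + 1)"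
proof -
  let ?G = "\<lambda>i. card {j \<in> {1..p}. \<sigma>1 i < \<sigma>1 j}"
  let ?L = "\<lambda>i. card {j \<in> {1..p}. \<sigma>2 j < \<sigma>2 i}"
  have "2 * (\<Sum>i=1..p. ?G i) + p = p * p"
    using sum_card_greater_inj_on[OF _ inj_on_\<sigma>1] by (cases p) simp_all
  from this[THEN arg_cong[where f = int]]
  have pairs_\<sigma>1: "2 * int (\<Sum>i=1..p. ?G i) + int p = int p * int p"
    by simp
  have "2 * (\<Sum>i=1..p. ?L i) + p = p * p"
    using sum_card_less_inj_on[OF _ inj_on_\<sigma>2] by (cases p) simp_all
  from this[THEN arg_cong[where f = int]]
  have pairs_\<sigma>2: "2 * int (\<Sum>i=1..p. ?L i) + int p = int p * int p"
    by simp
  have each: "int (card (U \<inter> {\<sigma>1 i<..<n1 + \<sigma>2 i}))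
      = (int n1 + 1 - int (\<sigma>1 i)) + int (\<sigma>2 i) - 2 - int (?G i) - int (?L i)"
    if "i \<in> {1..p}" for i
    using card_unused_between[OF that] by linarith
  have "int (\<Sum>i=1..p. card (U \<inter> {\<sigma>1 i<..<n1 + \<sigma>2 i}))
      = (\<Sum>i=1..p. (int n1 + 1 - int (\<sigma>1 i)) + int (\<sigma>2 i) - 2 - int (?G i) - int (?L i))"
    unfolding of_nat_sum by (rule sum.cong[OF refl each])
  also have "\<dots> = (\<Sum>i=1..p. int n1 + 1 - int (\<sigma>1 i)) + (\<Sum>i=1..p. int (\<sigma>2 i)) - 2 * int p
      - int (\<Sum>i=1..p. ?G i) - int (\<Sum>i=1..p. ?L i)"
    by (simp only: sum_subtractf sum.distrib of_nat_sum sum_constant card_atLeastAtMost diff_Suc_1)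
  finally show ?thesis
    using pairs_\<sigma>1 pairs_\<sigma>2 by (simp add: distrib_left)
qed

theorem Cr_F:
  "int (Cr (F n1 n2 p \<sigma>1 \<sigma>2 \<pi>')) = alpha n1 p \<sigma>1 + beta p \<sigma>2 + int (Cr \<pi>')"
proof -
  have "finite new_blocks" "finite old_blocks"
    unfolding new_blocks_def old_blocks_def using finite_\<pi>' by simp_all
  then have "Cr (F n1 n2 p \<sigma>1 \<sigma>2 \<pi>')
      = inv_num p \<sigma>2 + Cr \<pi>' + (\<Sum>i=1..p. card (U \<inter> {\<sigma>1 i<..<n1 + \<sigma>2 i}))"
    using Cr_Un_disjoint[OF _ _ new_blocks_disjoint_old_blocks]
    unfolding F_eq_new_blocks_Un_old_blocks
    by (simp add: Cr_new_blocks Cr_old_blocks card_crossings_new_old no_crossings_old_new)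
  moreover have "2 * int (p * (p + 1) div 2) = int p * (int p + 1)"
  proof -
    have "2 * (p * (p + 1) div 2) = p * (p + 1)"
      by simp
    then show ?thesis
      by (metis of_nat_1 of_nat_add of_nat_mult of_nat_numeral)
  qed
  ultimately show ?thesis
    unfolding alpha_def beta_def using sum_card_unused_between by simp
qed

end

theorem lemma2p6:
  fixes ns :: "nat list" and p :: nat and \<sigma>1 \<sigma>2 :: "nat \<Rightarrow> nat" and \<pi>' :: "nat set set"
  assumes "length ns \<ge> 3"
    and "\<forall>n\<in>set ns. n \<ge> 1"
    and "1 \<le> p" and "p \<le> min (ns ! 0) (ns ! 1)"
    and "\<pi>' \<in> C2 ((ns ! 0 + ns ! 1 - 2 * p) # drop 2 ns)"
    and "inj_map p (ns ! 0) \<sigma>1"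
    and "\<forall>i j. 1 \<le> i \<and> i < j \<and> j \<le> p \<longrightarrow> \<sigma>1 j < \<sigma>1 i"
    and "inj_map p (ns ! 1) \<sigma>2"
  shows "int (Cr (F (ns ! 0) (ns ! 1) p \<sigma>1 \<sigma>2 \<pi>'))
           = alpha (ns ! 0) p \<sigma>1 + beta p \<sigma>2 + int (Cr \<pi>')"
proof -
  interpret F_construction "ns ! 0" "ns ! 1" p \<sigma>1 \<sigma>2 \<pi>' "drop 2 ns"
    using assms(4-8) by unfold_locales auto
  show ?thesis
    by (rule Cr_F)
qed

end
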